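(* Let $a<b$, let $\alpha\in C^1([a,b],\,]0,1[)$, fix $n\in\mathbb{N}$ and an integer $N\ge n+1$, and let $x\in C^{n+1}([a,b],\mathbb{R})$. For $t\in\,]a,b]$ and $k\ge n+1$ let $V_k(t)=(k-n)\int_a^t(\tau-a)^{k-n-1}x(\tau)\,d\tau$, and define $$A(\alpha(t),k)=\frac{1}{\Gamma(k+1+\alpha(t))}\Big[1+\sum_{p=n+1-k}^{N}\frac{\Gamma(p-n-\alpha(t))}{\Gamma(-\alpha(t)-k)(p-n+k)!}\Big],\quad k=0,\dots,n,$$ $$B(\alpha(t),k)=\frac{\Gamma(k-n-\alpha(t))}{\Gamma(\alpha(t))\Gamma(1-\alpha(t))(k-n)!},\quad k\ge n+1.$$ Then for every $t\in\,]a,b]$, $${}_aI_t^{\alpha(t)}x(t)=(t-a)^{\alpha(t)}\Big[\sum_{k=0}^nA(\alpha(t),k)(t-a)^kx^{(k)}(t)+\sum_{k=n+1}^NB(\alpha(t),k)(t-a)^{n-k}V_k(t)\Big]+E_N(t),$$ where $$|E_N(t)|\le L_{n+1}(t)\frac{\exp\big((n+\alpha(t))^2+n+\alpha(t)\big)}{\Gamma(n+1+\alpha(t))(n+\alpha(t))N^{n+\alpha(t)}}(t-a)^{n+1+\alpha(t)},\qquad L_{n+1}(t)=\max_{\tau\in[a,t]}|x^{(n+1)}(\tau)|.$$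
   Context: For a function $\alpha:[a,b]\to\,]0,1[$ and $t\in[a,b]$, the left Riemann–Liouville fractional integral of variable order $\alpha(\cdot)$ is $${}_aI_t^{\alpha(t)}x(t)=\frac{1}{\Gamma(\alpha(t))}\int_a^t(t-\tau)^{\alpha(t)-1}x(\tau)\,d\tau.$$ *)

theory Defs
  imports "HOL-Analysis.Analysis"
begin

definition RL_left_integral :: "real \<Rightarrow> (real \<Rightarrow> real) \<Rightarrow> (real \<Rightarrow> real) \<Rightarrow> real \<Rightarrow> real" where
  "RL_left_integral a \<alpha> x t =
     (1 / Gamma (\<alpha> t)) * (LBINT \<tau>:{a..t}. (t - \<tau>) powr (\<alpha> t - 1) * x \<tau>)"

definition V_fun :: "real \<Rightarrow> (real \<Rightarrow> real) \<Rightarrow> nat \<Rightarrow> nat \<Rightarrow> real \<Rightarrow> real" where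
  "V_fun a x n k t = real (k - n) * (LBINT \<tau>:{a..t}. (\<tau> - a) ^ (k - n - 1) * x \<tau>)"

text \<open>A(alpha,k) for k = 0..n; the index p runs over the integers n+1-k .. N
  (all natural numbers, since k <= n).\<close>
definition A_coef :: "nat \<Rightarrow> nat \<Rightarrow> real \<Rightarrow> nat \<Rightarrow> real" where
  "A_coef n N al k =
     (1 / Gamma (real k + 1 + al)) *
     (1 + (\<Sum>p = n + 1 - k..N.
              Gamma (real p - real n - al) /
              (Gamma (- al - real k) * fact (p + k - n))))"

definition B_coef :: "nat \<Rightarrow> real \<Rightarrow> nat \<Rightarrow> real" where
  "B_coef n al k =
     Gamma (real k - real n - al) / (Gamma al * Gamma (1 - al) * fact (k - n))"

end

theory Submission
  imports Defs
begin

text \<open>Write \<open>\<beta> = n + \<alpha>(t)\<close>. Integrating by parts \<open>n + 1\<close> times turns the Riemann--Liouville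
  integral into the boundary terms \<open>(t - a)^(\<beta> - j) / \<Gamma>(\<beta> - j + 1) x^(n-j)(a)\<close>, \<open>j \<le> n\<close>, plus
  \<open>1/\<Gamma>(\<beta> + 1) \<integral> (t - \<tau>)^\<beta> x^(n+1)(\<tau>) d\<tau>\<close> over \<open>[a, t]\<close>. In this integral the kernel
  \<open>(t - \<tau>)^\<beta> = ((t - a) - (\<tau> - a))^\<beta>\<close> is split into its binomial Taylor polynomial of degree
  \<open>N\<close> at \<open>a\<close> and a remainder. Integrating the polynomial part by parts again, its boundary terms
  at \<open>a\<close> cancel the boundary terms above, those at \<open>t\<close> give the coefficients \<open>A\<close>, and the
  remaining integral gives the terms \<open>B V_k\<close>. By Lagrange's form the remainder has constant sign,
  so its absolute integral equals its integral \<open>(t - a)^(\<beta> + 1) (-\<beta>)_(N+1) / ((N + 1)! (\<beta> + 1))\<close>,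
  and the elementary bound \<open>|(-\<beta>)_(N+1)| / (N + 1)! \<le> C(\<beta>) N^(-\<beta>-1)\<close> gives the error estimate.\<close>

section \<open>Repeated integration by parts\<close>

lemma alternating_sum_product_telescope:
  fixes F G :: "nat \<Rightarrow> real"
  shows "(\<Sum>j\<le>m. (-1)^j * (F (Suc j) * G (m - j) + F j * G (Suc (m - j))))
         = F 0 * G (Suc m) + (-1)^m * F (Suc m) * G 0"
proof (induction m arbitrary: G)
  case 0
  then show ?case by simp
next
  case (Suc m)
  have "(\<Sum>j\<le>m. (-1)^j * (F (Suc j) * G (Suc m - j) + F j * G (Suc (Suc m - j))))
      = (\<Sum>j\<le>m. (-1)^j * (F (Suc j) * G (Suc (m - j)) + F j * G (Suc (Suc (m - j)))))"
    by (intro sum.cong refl) (simp add: Suc_diff_le)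
  also have "\<dots> = F 0 * G (Suc (Suc m)) + (-1)^m * F (Suc m) * G 1"
    using Suc.IH[of "\<lambda>i. G (Suc i)"] by simp
  finally show ?case by (simp add: algebra_simps)
qed

lemma has_integral_iterated_by_parts:
  fixes f g :: "nat \<Rightarrow> real \<Rightarrow> real"
  assumes "a \<le> t"
    and fc: "\<And>j. j \<le> m \<Longrightarrow> continuous_on {a..t} (f j)"
    and fd: "\<And>j \<tau>. j \<le> m \<Longrightarrow> \<tau> \<in> {a<..<t} \<Longrightarrow> (f j has_real_derivative f (Suc j) \<tau>) (at \<tau>)"
    and gc: "\<And>j. j \<le> Suc m \<Longrightarrow> continuous_on {a..t} (g j)"
    and gd: "\<And>j \<tau>. j \<le> m \<Longrightarrow> \<tau> \<in> {a<..<t} \<Longrightarrow> (g j has_real_derivative g (Suc j) \<tau>) (at \<tau>)"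
  shows "((\<lambda>\<tau>. f (Suc m) \<tau> * g 0 \<tau>) has_integral
     (-1)^m * ((\<Sum>j\<le>m. (-1)^j * (f j t * g (m - j) t - f j a * g (m - j) a))
               - integral {a..t} (\<lambda>\<tau>. f 0 \<tau> * g (Suc m) \<tau>))) {a..t}"
proof -
  define \<Phi> where "\<Phi> = (\<lambda>\<tau>. \<Sum>j\<le>m. (-1)^j * (f j \<tau> * g (m - j) \<tau>))"
  have "continuous_on {a..t} \<Phi>"
    unfolding \<Phi>_def by (intro continuous_intros fc gc) auto
  moreover have "(\<Phi> has_vector_derivative (f 0 \<tau> * g (Suc m) \<tau> + (-1)^m * f (Suc m) \<tau> * g 0 \<tau>)) (at \<tau>)"
    if \<tau>: "\<tau> \<in> {a<..<t}" for \<tau>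
  proof -
    have "(\<Phi> has_real_derivative
            (\<Sum>j\<le>m. (-1)^j * (f (Suc j) \<tau> * g (m - j) \<tau> + f j \<tau> * g (Suc (m - j)) \<tau>))) (at \<tau>)"
      unfolding \<Phi>_def
      by (intro DERIV_sum DERIV_cmult, rule DERIV_mult'[OF fd gd, THEN DERIV_cong]) (use \<tau> in auto)
    then show ?thesis
      using alternating_sum_product_telescope[of "\<lambda>j. f j \<tau>" "\<lambda>j. g j \<tau>" m]
      by (simp add: has_real_derivative_iff_has_vector_derivative)
  qed
  ultimately have FTC: "((\<lambda>\<tau>. f 0 \<tau> * g (Suc m) \<tau> + (-1)^m * f (Suc m) \<tau> * g 0 \<tau>)
                          has_integral (\<Phi> t - \<Phi> a)) {a..t}"
    by (rule fundamental_theorem_of_calculus_interior[OF \<open>a \<le> t\<close>])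
  have "(\<lambda>\<tau>. f 0 \<tau> * g (Suc m) \<tau>) integrable_on {a..t}"
    by (intro integrable_continuous_interval continuous_intros fc gc) auto
  from has_integral_diff[OF FTC integrable_integral[OF this]]
  have "((\<lambda>\<tau>. (-1)^m * f (Suc m) \<tau> * g 0 \<tau>)
          has_integral (\<Phi> t - \<Phi> a - integral {a..t} (\<lambda>\<tau>. f 0 \<tau> * g (Suc m) \<tau>))) {a..t}"
    by simp
  from has_integral_mult_right[OF this, of "(-1)^m"]
  show ?thesis
    unfolding \<Phi>_def
    by (simp add: mult.assoc[symmetric] sum_subtractf[symmetric] right_diff_distrib
        flip: power_mult_distrib)
qed

lemma frac_shift_not_Ints:
  fixes al r :: real
  assumes "0 < al" "al < 1" "r \<in> \<int>"
  shows "r + al \<notin> \<int>" "r - al \<notin> \<int>"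
proof -
  have "al \<notin> \<int>"
    using assms(1,2) by (auto elim!: Ints_cases)
  then show "r + al \<notin> \<int>"
    using assms(3) Ints_diff[of "r + al" r] by auto
  show "r - al \<notin> \<int>"
    using \<open>al \<notin> \<int>\<close> assms(3) Ints_diff[of r "r - al"] by auto
qed

lemma pochhammer_neg_mult_Gamma:
  fixes be :: real
  assumes "be \<notin> \<int>"
  shows "(-1)^j * pochhammer (-be) j * Gamma (be - real j + 1) = Gamma (be + 1)"
proof -
  define z where "z = be - real j + 1"
  have "z \<notin> \<int>"
    using assms Ints_add[of z "real j - 1"] by (auto simp: z_def)
  then have "z \<notin> \<int>\<^sub>\<le>\<^sub>0"
    using nonpos_Ints_subset_Ints by blast
  then have "pochhammer z j * Gamma z = Gamma (z + real j)"
    by (simp add: pochhammer_Gamma Gamma_eq_zero_iff)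
  moreover have "(-1::real)^j * pochhammer (-be) j = pochhammer z j"
    by (simp add: z_def pochhammer_minus mult.assoc[symmetric] flip: power_mult_distrib)
  ultimately show ?thesis by (simp add: z_def)
qed

text \<open>Partial sums of \<open>1/(\<beta> + 1) = \<integral>_0^1 (1 - s)^\<beta> ds = \<Sum>_p (-\<beta>)_p / (p! (p + 1))\<close>, with the exact tail.\<close>

lemma sum_pochhammer_neg_div_Suc:
  fixes be :: real
  assumes "be + 1 \<noteq> 0"
  shows "1 / (be + 1) - (\<Sum>p\<le>N. pochhammer (-be) p / fact p / (real p + 1))
       = pochhammer (-be) (Suc N) / (fact (Suc N) * (be + 1))"
proof (induction N)
  case 0
  then show ?case using assms by (simp add: field_simps)
next
  case (Suc N)
  define P where "P = pochhammer (-be) (Suc N)"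
  define F :: real where "F = fact (Suc N)"
  have "F > 0" by (simp add: F_def)
  have "1 / (be + 1) - (\<Sum>p\<le>Suc N. pochhammer (-be) p / fact p / (real p + 1))
      = (1 / (be + 1) - (\<Sum>p\<le>N. pochhammer (-be) p / fact p / (real p + 1))) - P / F / (real (Suc N) + 1)"
    by (simp only: sum.atMost_Suc diff_diff_eq P_def F_def)
  also have "\<dots> = P / (F * (be + 1)) - P / F / (real (Suc N) + 1)"
    by (simp only: Suc.IH P_def F_def)
  also have "\<dots> = P * (real N + 1 - be) / (F * (real N + 2) * (be + 1))"
    using assms \<open>F > 0\<close> by (simp add: divide_simps) (simp add: algebra_simps)
  also have "\<dots> = pochhammer (-be) (Suc (Suc N)) / (fact (Suc (Suc N)) * (be + 1))"
    by (simp add: P_def F_def pochhammer_rec' fact_Suc[of "Suc N"] algebra_simps)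
  finally show ?case .
qed

definition falling_fact :: "nat \<Rightarrow> nat \<Rightarrow> real" where
  "falling_fact p j = (\<Prod>i<j. real (p - i))"

lemma falling_fact_0 [simp]: "falling_fact p 0 = 1"
  by (simp add: falling_fact_def)

lemma falling_fact_Suc: "falling_fact p (Suc j) = falling_fact p j * real (p - j)"
  by (simp add: falling_fact_def)

lemma falling_fact_eq_0: "p < j \<Longrightarrow> falling_fact p j = 0"
  unfolding falling_fact_def by (rule prod_zero) auto

lemma falling_fact_eq_fact_div: "j \<le> p \<Longrightarrow> falling_fact p j = fact p / fact (p - j)"
proof (induction j)
  case 0
  then show ?case by simp
next
  case (Suc j)
  then have "(fact (p - j) :: real) = real (p - j) * fact (p - Suc j)"
    by (metis Suc_diff_Suc Suc_le_lessD fact_Suc of_nat_fact of_nat_mult)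
  with Suc show ?case by (simp add: falling_fact_Suc field_simps)
qed

section \<open>The Taylor polynomial of the kernel\<close>

lemma has_integral_powr_kernel:
  fixes a t e :: real
  assumes "a < t" "0 < e"
  shows "((\<lambda>\<tau>. (t - \<tau>) powr (e - 1)) has_integral (t - a) powr e / e) {a..t}"
proof -
  have "((\<lambda>\<tau>. (t - \<tau>) powr (e - 1)) has_integral
          (\<lambda>\<tau>. - ((t - \<tau>) powr e / e)) t - (\<lambda>\<tau>. - ((t - \<tau>) powr e / e)) a) {a..t}"
  proof (rule fundamental_theorem_of_calculus_interior)
    show "continuous_on {a..t} (\<lambda>\<tau>. - ((t - \<tau>) powr e / e))"
      using assms by (intro continuous_intros continuous_on_powr') auto
    fix \<tau> assume "\<tau> \<in> {a<..<t}"
    then show "((\<lambda>\<tau>. - ((t - \<tau>) powr e / e)) has_vector_derivative (t - \<tau>) powr (e - 1)) (at \<tau>)"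
      using assms unfolding has_real_derivative_iff_has_vector_derivative[symmetric]
      by (auto intro!: derivative_eq_intros)
  qed (use assms in auto)
  then show ?thesis by simp
qed

lemma has_integral_power_shift:
  fixes a t :: real
  assumes "a \<le> t"
  shows "((\<lambda>\<tau>. (\<tau> - a)^p) has_integral (t - a)^(Suc p) / real (Suc p)) {a..t}"
proof -
  have "((\<lambda>\<tau>. (\<tau> - a)^p) has_integral
          (\<lambda>\<tau>. (\<tau> - a)^(Suc p) / real (Suc p)) t - (\<lambda>\<tau>. (\<tau> - a)^(Suc p) / real (Suc p)) a) {a..t}"
  proof (rule fundamental_theorem_of_calculus_interior[OF assms])
    show "continuous_on {a..t} (\<lambda>\<tau>. (\<tau> - a)^(Suc p) / real (Suc p))"
      by (intro continuous_intros) auto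
    fix \<tau> :: real
    show "((\<lambda>\<tau>. (\<tau> - a)^(Suc p) / real (Suc p)) has_vector_derivative (\<tau> - a)^p) (at \<tau>)"
      unfolding has_real_derivative_iff_has_vector_derivative[symmetric]
      by (auto intro!: derivative_eq_intros simp del: power_Suc)
  qed
  then show ?thesis by simp
qed

text \<open>The \<open>j\<close>-th derivative of the Taylor polynomial of degree \<open>N\<close> at \<open>a\<close> of \<open>\<tau> \<mapsto> (t - \<tau>)^\<beta>\<close>.\<close>

definition kernel_taylor_deriv :: "real \<Rightarrow> real \<Rightarrow> real \<Rightarrow> nat \<Rightarrow> nat \<Rightarrow> real \<Rightarrow> real" where
  "kernel_taylor_deriv a t be N j \<tau> =
     (\<Sum>p\<le>N. pochhammer (-be) p / fact p * (t - a) powr (be - real p)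
              * falling_fact p j * (\<tau> - a)^(p - j))"

lemma kernel_taylor_deriv_0:
  "kernel_taylor_deriv a t be N 0 \<tau> =
     (\<Sum>p\<le>N. pochhammer (-be) p / fact p * (t - a) powr (be - real p) * (\<tau> - a)^p)"
  by (simp add: kernel_taylor_deriv_def)

lemma has_real_derivative_kernel_taylor_deriv:
  "(kernel_taylor_deriv a t be N j has_real_derivative kernel_taylor_deriv a t be N (Suc j) \<tau>) (at \<tau>)"
proof -
  have "((\<lambda>\<tau>. kernel_taylor_deriv a t be N j \<tau>) has_real_derivative
          (\<Sum>p\<le>N. pochhammer (-be) p / fact p * (t - a) powr (be - real p) * falling_fact p j
                    * (real (p - j) * (\<tau> - a)^(p - j - 1)))) (at \<tau>)"
    unfolding kernel_taylor_deriv_def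
    by (intro DERIV_sum DERIV_cmult) (auto intro!: derivative_eq_intros)
  then show ?thesis
    unfolding kernel_taylor_deriv_def[abs_def] by (simp add: falling_fact_Suc ac_simps)
qed

lemma kernel_taylor_deriv_at_left:
  assumes "j \<le> N"
  shows "kernel_taylor_deriv a t be N j a = pochhammer (-be) j * (t - a) powr (be - real j)"
proof -
  have "kernel_taylor_deriv a t be N j a =
          (\<Sum>p\<le>N. if p = j then pochhammer (-be) j * (t - a) powr (be - real j) else 0)"
    unfolding kernel_taylor_deriv_def
    by (intro sum.cong refl) (auto simp: falling_fact_eq_0 falling_fact_eq_fact_div)
  then show ?thesis using assms by simp
qed

lemma kernel_taylor_deriv_at_right:
  assumes "a < t"
  shows "kernel_taylor_deriv a t be N j t =
           (t - a) powr (be - real j) * (\<Sum>p\<le>N. pochhammer (-be) p / fact p * falling_fact p j)"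
  unfolding kernel_taylor_deriv_def sum_distrib_left
proof (intro sum.cong refl)
  fix p
  show "pochhammer (-be) p / fact p * (t - a) powr (be - real p) * falling_fact p j * (t - a)^(p - j)
        = (t - a) powr (be - real j) * (pochhammer (-be) p / fact p * falling_fact p j)"
  proof (cases "p < j")
    case False
    then have "(t - a) powr (be - real p) * (t - a)^(p - j) = (t - a) powr (be - real j)"
      using assms by (simp add: powr_realpow[symmetric] of_nat_diff flip: powr_add)
    then show ?thesis by (simp add: ac_simps)
  qed (simp add: falling_fact_eq_0)
qed

text \<open>By Lagrange's form of the remainder, \<open>(t - \<tau>)^\<beta>\<close> minus its Taylor polynomial equals
  \<open>(-\<beta>)_(N+1) (t - \<xi>)^(\<beta>-N-1) (\<tau> - a)^(N+1) / (N + 1)!\<close>, which has the sign of \<open>(-\<beta>)_(N+1)\<close>.\<close>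

lemma kernel_taylor_remainder_sign:
  fixes a t be \<tau> :: real
  assumes "a \<le> \<tau>" "\<tau> < t"
  shows "pochhammer (-be) (Suc N) * ((t - \<tau>) powr be - kernel_taylor_deriv a t be N 0 \<tau>) \<ge> 0"
proof (cases "\<tau> = a")
  case True
  then show ?thesis
    using kernel_taylor_deriv_at_left[of 0 N a t be] by simp
next
  case False
  with assms have \<tau>: "a < \<tau>" "\<tau> < t" by auto
  define diff where "diff = (\<lambda>m s. pochhammer (-be) m * (t - s) powr (be - real m))"
  have "DERIV (diff m) s :> diff (Suc m) s" if "s \<le> \<tau>" for m s
  proof -
    have "DERIV (diff m) s :> pochhammer (-be) m * (- ((be - real m) * (t - s) powr (be - real m - 1)))"
      unfolding diff_def using that \<tau> by (auto intro!: derivative_eq_intros)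
    then show ?thesis
      unfolding diff_def by (simp add: pochhammer_rec' algebra_simps)
  qed
  then obtain \<xi> where \<xi>: "a < \<xi>" "\<xi> < \<tau>" and taylor:
    "(t - \<tau>) powr be = (\<Sum>m<Suc N. diff m a / fact m * (\<tau> - a)^m)
                       + diff (Suc N) \<xi> / fact (Suc N) * (\<tau> - a)^(Suc N)"
    using Taylor_up[of "Suc N" diff "\<lambda>s. (t - s) powr be" a \<tau> a] \<tau> by (auto simp: diff_def)
  have "(\<Sum>m<Suc N. diff m a / fact m * (\<tau> - a)^m) = kernel_taylor_deriv a t be N 0 \<tau>"
    unfolding kernel_taylor_deriv_0 lessThan_Suc_atMost diff_def
    by (intro sum.cong refl) (simp add: field_simps)
  moreover define X where "X = (t - \<xi>) powr (be - real (Suc N)) / fact (Suc N) * (\<tau> - a)^(Suc N)"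
  moreover have "diff (Suc N) \<xi> / fact (Suc N) * (\<tau> - a)^(Suc N) = pochhammer (-be) (Suc N) * X"
    unfolding diff_def X_def by (simp only: times_divide_eq_left times_divide_eq_right mult.assoc)
  ultimately have "(t - \<tau>) powr be - kernel_taylor_deriv a t be N 0 \<tau> = pochhammer (-be) (Suc N) * X"
    using taylor by simp
  moreover have "X \<ge> 0"
    using \<xi> \<tau> by (simp add: X_def)
  ultimately show ?thesis
    by (metis mult.assoc mult_nonneg_nonneg zero_le_square)
qed

lemma has_integral_kernel_taylor_remainder:
  fixes a t be :: real
  assumes "a < t" "be > 0"
  shows "((\<lambda>\<tau>. (t - \<tau>) powr be - kernel_taylor_deriv a t be N 0 \<tau>) has_integral
           (t - a) powr (be + 1) * pochhammer (-be) (Suc N) / (fact (Suc N) * (be + 1))) {a..t}"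
proof -
  define h where "h = t - a"
  have h: "h > 0" using assms by (simp add: h_def)
  have kernel: "((\<lambda>\<tau>. (t - \<tau>) powr be) has_integral h powr (be + 1) / (be + 1)) {a..t}"
    using has_integral_powr_kernel[OF assms(1), of "be + 1"] assms by (simp add: h_def)
  have "h powr (be - real p) * (h^(Suc p) / real (Suc p)) = h powr (be + 1) / (real p + 1)" for p
  proof -
    have "h^(Suc p) = h powr (real p + 1)"
      using h by (simp add: powr_realpow[symmetric] add.commute del: power_Suc)
    then show ?thesis by (simp add: add.commute flip: powr_add)
  qed
  then have "(\<Sum>p\<le>N. pochhammer (-be) p / fact p * h powr (be - real p) * (h^(Suc p) / real (Suc p)))
      = h powr (be + 1) * (\<Sum>p\<le>N. pochhammer (-be) p / fact p / (real p + 1))"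
    unfolding sum_distrib_left by (intro sum.cong refl) (simp only: mult.assoc, simp add: field_simps)
  moreover have "((\<lambda>\<tau>. kernel_taylor_deriv a t be N 0 \<tau>) has_integral
      (\<Sum>p\<le>N. pochhammer (-be) p / fact p * h powr (be - real p) * (h^(Suc p) / real (Suc p)))) {a..t}"
    unfolding kernel_taylor_deriv_0 h_def using assms(1)
    by (intro has_integral_sum has_integral_mult_right has_integral_power_shift) auto
  ultimately have poly: "((\<lambda>\<tau>. kernel_taylor_deriv a t be N 0 \<tau>) has_integral
      h powr (be + 1) * (\<Sum>p\<le>N. pochhammer (-be) p / fact p / (real p + 1))) {a..t}"
    by simp
  have "h powr (be + 1) / (be + 1) - h powr (be + 1) * (\<Sum>p\<le>N. pochhammer (-be) p / fact p / (real p + 1))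
      = h powr (be + 1) * (1 / (be + 1) - (\<Sum>p\<le>N. pochhammer (-be) p / fact p / (real p + 1)))"
    by (simp add: algebra_simps)
  also have "\<dots> = h powr (be + 1) * pochhammer (-be) (Suc N) / (fact (Suc N) * (be + 1))"
    using assms(2) sum_pochhammer_neg_div_Suc[of be N] by (simp only: times_divide_eq_right)
  finally show ?thesis
    using has_integral_diff[OF kernel poly] by (simp add: h_def)
qed

lemma has_integral_abs_kernel_taylor_remainder:
  fixes a t be :: real
  assumes "a < t" "be > 0" "be \<notin> \<int>"
  shows "((\<lambda>\<tau>. \<bar>(t - \<tau>) powr be - kernel_taylor_deriv a t be N 0 \<tau>\<bar>) has_integral
           (t - a) powr (be + 1) * \<bar>pochhammer (-be) (Suc N)\<bar> / (fact (Suc N) * (be + 1))) {a..t}"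
proof -
  define R where "R = (\<lambda>\<tau>. (t - \<tau>) powr be - kernel_taylor_deriv a t be N 0 \<tau>)"
  define K where "K = pochhammer (-be) (Suc N)"
  have "K \<noteq> 0"
    using assms(3) by (auto simp: K_def pochhammer_eq_0_iff)
  have int: "((\<lambda>\<tau>. sgn K * R \<tau>) has_integral
          sgn K * ((t - a) powr (be + 1) * K / (fact (Suc N) * (be + 1)))) {a..t}"
    unfolding R_def K_def
    by (intro has_integral_mult_right has_integral_kernel_taylor_remainder assms)
  have val: "sgn K * ((t - a) powr (be + 1) * K / (fact (Suc N) * (be + 1)))
               = (t - a) powr (be + 1) * \<bar>K\<bar> / (fact (Suc N) * (be + 1))"
    by (simp add: abs_sgn mult_ac)
  have eq: "\<bar>R \<tau>\<bar> = sgn K * R \<tau>" if "\<tau> \<in> {a..t} - {t}" for \<tau>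
    using kernel_taylor_remainder_sign[of a \<tau> t be N] that \<open>K \<noteq> 0\<close>
    by (auto simp: R_def K_def sgn_if zero_le_mult_iff)
  have "((\<lambda>\<tau>. \<bar>R \<tau>\<bar>) has_integral (t - a) powr (be + 1) * \<bar>K\<bar> / (fact (Suc N) * (be + 1))) {a..t}"
    using has_integral_spike_finite[of "{t}", OF _ eq int] unfolding val by blast
  then show ?thesis
    by (simp only: R_def K_def)
qed

lemma abs_integral_kernel_taylor_remainder_mult_le:
  fixes a t be L :: real and g :: "real \<Rightarrow> real"
  assumes "a < t" "be > 0" "be \<notin> \<int>"
    and g: "continuous_on {a..t} g" "\<And>\<tau>. \<tau> \<in> {a..t} \<Longrightarrow> \<bar>g \<tau>\<bar> \<le> L"
  shows "\<bar>integral {a..t} (\<lambda>\<tau>. (t - \<tau>) powr be * g \<tau>)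
            - integral {a..t} (\<lambda>\<tau>. kernel_taylor_deriv a t be N 0 \<tau> * g \<tau>)\<bar>
         \<le> L * ((t - a) powr (be + 1) * \<bar>pochhammer (-be) (Suc N)\<bar> / (fact (Suc N) * (be + 1)))"
proof -
  define R where "R = (\<lambda>\<tau>. (t - \<tau>) powr be - kernel_taylor_deriv a t be N 0 \<tau>)"
  have abs_R: "((\<lambda>\<tau>. L * \<bar>R \<tau>\<bar>) has_integral
          L * ((t - a) powr (be + 1) * \<bar>pochhammer (-be) (Suc N)\<bar> / (fact (Suc N) * (be + 1)))) {a..t}"
    unfolding R_def by (intro has_integral_mult_right has_integral_abs_kernel_taylor_remainder assms)
  have kernel: "continuous_on {a..t} (\<lambda>\<tau>. (t - \<tau>) powr be)"
    using assms(2) by (intro continuous_intros continuous_on_powr') auto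
  have poly: "continuous_on {a..t} (kernel_taylor_deriv a t be N 0)"
    unfolding kernel_taylor_deriv_0 by (intro continuous_intros)
  have "continuous_on {a..t} R"
    unfolding R_def using kernel poly by (rule continuous_on_diff)
  then have "norm (integral {a..t} (\<lambda>\<tau>. R \<tau> * g \<tau>)) \<le> integral {a..t} (\<lambda>\<tau>. L * \<bar>R \<tau>\<bar>)"
    using abs_R g
    by (intro integral_norm_bound_integral integrable_continuous_interval continuous_intros)
       (auto simp: integrable_on_def abs_mult mult.commute[of L] intro: mult_left_mono)
  moreover have "integral {a..t} (\<lambda>\<tau>. R \<tau> * g \<tau>)
      = integral {a..t} (\<lambda>\<tau>. (t - \<tau>) powr be * g \<tau>)
        - integral {a..t} (\<lambda>\<tau>. kernel_taylor_deriv a t be N 0 \<tau> * g \<tau>)"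
    unfolding R_def left_diff_distrib
    by (intro integral_diff integrable_continuous_interval continuous_on_mult kernel poly g(1))
  ultimately show ?thesis
    using integral_unique[OF abs_R] by simp
qed

section \<open>Size of the remainder coefficient\<close>

lemma abs_pochhammer_neg_le:
  fixes be :: real
  assumes "real n < be" "be < real n + 1"
  shows "\<bar>pochhammer (-be) (Suc n)\<bar> \<le> be * fact n"
proof -
  have "\<bar>pochhammer (-be) (Suc n)\<bar> = pochhammer (be - real n) (Suc n)"
    using assms by (simp add: pochhammer_minus abs_mult pochhammer_nonneg)
  also have "\<dots> = be * pochhammer (be - real n) n"
    by (simp add: pochhammer_rec')
  also have "\<dots> \<le> be * pochhammer 1 n"
    using assms unfolding pochhammer_prod by (intro mult_left_mono prod_mono) auto
  finally show ?thesis by (simp add: pochhammer_fact)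
qed

lemma one_minus_div_le_powr:
  fixes M c :: real
  assumes "M > 0" "c \<ge> 0"
  shows "1 - c / M \<le> (M / (M + 1)) powr c"
proof -
  have "c * ln (1 + 1 / M) \<le> c / M"
    using assms ln_add_one_self_le_self[of "1 / M"] mult_left_mono by fastforce
  then have "1 - c / M \<le> exp (- (c * ln (1 + 1 / M)))"
    using exp_ge_add_one_self[of "- (c / M)"] by (smt (verit) exp_le_cancel_iff)
  also have "\<dots> = (M / (M + 1)) powr c"
    using assms by (simp add: powr_def ln_div field_simps)
  finally show ?thesis .
qed

lemma abs_pochhammer_neg_div_fact_le:
  fixes be :: real
  assumes "real n < be" "be < real n + 1" "n \<le> N"
  shows "\<bar>pochhammer (-be) (Suc N)\<bar> / fact (Suc N)
         \<le> be / (real n + 1) * ((real n + 2) / (real N + 2)) powr (be + 1)"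
  using assms(3)
proof (induction N rule: dec_induct)
  case base
  have "\<bar>pochhammer (-be) (Suc n)\<bar> / fact (Suc n) \<le> be * fact n / fact (Suc n)"
    using abs_pochhammer_neg_le[OF assms(1,2)] by (intro divide_right_mono) auto
  then show ?case
    using assms by (simp add: add.commute)
next
  case (step N)
  have "\<bar>pochhammer (-be) (Suc (Suc N))\<bar> = (real N + 1 - be) * \<bar>pochhammer (-be) (Suc N)\<bar>"
    using step(1) assms(2) by (simp add: pochhammer_rec'[of _ "Suc N"] abs_mult)
  then have "\<bar>pochhammer (-be) (Suc (Suc N))\<bar> / fact (Suc (Suc N))
      = \<bar>pochhammer (-be) (Suc N)\<bar> / fact (Suc N) * (1 - (be + 1) / (real N + 2))"
    by (simp add: field_simps)
  also have "\<dots> \<le> be / (real n + 1) * ((real n + 2) / (real N + 2)) powr (be + 1)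
                 * ((real N + 2) / (real N + 2 + 1)) powr (be + 1)"
    using step(1,3) assms by (intro mult_mono one_minus_div_le_powr) auto
  also have "\<dots> = be / (real n + 1) * ((real n + 2) / (real (Suc N) + 2)) powr (be + 1)"
    by (simp add: mult.assoc flip: powr_mult)
  finally show ?case .
qed

lemma square_one_plus_half_le_exp:
  fixes x :: real
  assumes "x \<ge> 0"
  shows "(1 + x / 2)^2 \<le> exp x"
proof -
  have "(1 + x / 2)^2 \<le> (exp (x / 2))^2"
    using assms exp_ge_add_one_self[of "x / 2"] by (intro power_mono) auto
  then show ?thesis by (simp flip: exp_double)
qed

lemma two_mult_square_powr_le_exp:
  fixes be :: real
  assumes "real n < be" "be < real n + 1"
  shows "2 * be^2 * (real n + 2) powr (be - 1) \<le> (be + 1) * exp (be^2 + be)"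
proof (cases "n = 0")
  case True
  then have "(real n + 2) powr (be - 1) \<le> (real n + 2) powr 0"
    using assms by (intro powr_mono) auto
  then have "(real n + 2) powr (be - 1) \<le> 1"
    by simp
  then have "2 * be^2 * (real n + 2) powr (be - 1) \<le> 2 * be^2"
    by (intro mult_left_le) auto
  also have "\<dots> \<le> (be + 1) * (1 + (be^2 + be))"
    using assms by (simp add: power2_eq_square algebra_simps)
  also have "\<dots> \<le> (be + 1) * exp (be^2 + be)"
    using assms exp_ge_add_one_self[of "be^2 + be"] by (intro mult_left_mono) auto
  finally show ?thesis .
next
  case False
  then have be: "be \<ge> 1" using assms(1) by linarith
  have "(real n + 2) powr (be - 1) \<le> exp (be + 1) powr (be - 1)"
    using be assms(1) exp_ge_add_one_self[of "be + 1"] by (intro powr_mono2) auto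
  then have pow: "(real n + 2) powr (be - 1) \<le> exp (be^2 - 1)"
    by (simp add: powr_def power2_eq_square algebra_simps)
  have "4 * ((be + 1) * (1 + (be + 1) / 2)^2) = be^3 + 7 * be^2 + 15 * be + 9"
    by (simp add: power2_eq_square power3_eq_cube algebra_simps)
  moreover have "be^2 \<le> be^3"
    using be by (simp add: power2_eq_square power3_eq_cube)
  ultimately have "2 * be^2 \<le> (be + 1) * (1 + (be + 1) / 2)^2"
    using be by linarith
  also have "\<dots> \<le> (be + 1) * exp (be + 1)"
    using be by (intro mult_left_mono square_one_plus_half_le_exp) auto
  finally have "2 * be^2 * (real n + 2) powr (be - 1) \<le> (be + 1) * exp (be + 1) * exp (be^2 - 1)"
    by (rule mult_mono[OF _ pow]) (use be in auto)
  then show ?thesis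
    by (simp add: mult.assoc add.commute flip: exp_add)
qed

lemma powr_ratio_le:
  fixes be :: real
  assumes "be > 0" "n + 1 \<le> N"
  shows "((real n + 2) / (real N + 2)) powr (be + 1)
         \<le> 2 * (real n + 1) * (real n + 2) powr (be - 1) / real N powr be"
proof -
  have N: "real N \<ge> real n + 1" using assms(2) by simp
  have "(real n + 2) powr (be + 1) = (real n + 2) powr (2 + (be - 1))"
    by (simp add: add.commute)
  also have "\<dots> = (real n + 2) powr 2 * (real n + 2) powr (be - 1)"
    by (rule powr_add)
  also have "\<dots> = (real n + 2)^2 * (real n + 2) powr (be - 1)"
    by (subst powr_numeral) auto
  also have "\<dots> \<le> 2 * (real n + 1) * (real N + 2) * (real n + 2) powr (be - 1)"
  proof (rule mult_right_mono)
    have "(real n + 2)^2 \<le> 2 * (real n + 1) * (real n + 3)"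
      by (simp add: power2_eq_square algebra_simps)
    also have "\<dots> \<le> 2 * (real n + 1) * (real N + 2)"
      using N by (intro mult_left_mono) auto
    finally show "(real n + 2)^2 \<le> 2 * (real n + 1) * (real N + 2)" .
  qed simp
  moreover have "real N powr be * (real N + 2) \<le> (real N + 2) powr be * (real N + 2)"
    using assms(1) by (intro mult_right_mono powr_mono2) auto
  ultimately have "(real n + 2) powr (be + 1) / ((real N + 2) powr be * (real N + 2))
      \<le> 2 * (real n + 1) * (real N + 2) * (real n + 2) powr (be - 1) / (real N powr be * (real N + 2))"
    using N by (intro frac_le) auto
  then show ?thesis
    using N by (simp add: powr_divide powr_add)
qed

lemma remainder_coeff_le_exp:
  fixes be :: real
  assumes "real n < be" "be < real n + 1" "n + 1 \<le> N"
  shows "\<bar>pochhammer (-be) (Suc N)\<bar> / fact (Suc N) / (be + 1) \<le> exp (be^2 + be) / (be * real N powr be)"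
proof -
  have be: "be > 0" using assms(1) by linarith
  have N: "real N powr be > 0" using assms(3) by simp
  have "\<bar>pochhammer (-be) (Suc N)\<bar> / fact (Suc N) / (be + 1)
      \<le> be / (real n + 1) * ((real n + 2) / (real N + 2)) powr (be + 1) / (be + 1)"
    using abs_pochhammer_neg_div_fact_le[OF assms(1,2)] assms(3) be by (intro divide_right_mono) auto
  also have "\<dots> \<le> be / (real n + 1) * (2 * (real n + 1) * (real n + 2) powr (be - 1) / real N powr be) / (be + 1)"
    using powr_ratio_le[OF be assms(3)] be by (intro divide_right_mono mult_left_mono) auto
  also have "\<dots> = 2 * be^2 * (real n + 2) powr (be - 1) / ((be + 1) * (be * real N powr be))"
  proof -
    have "be / (m + 1) * (2 * (m + 1) * P / Q) / (be + 1) = 2 * be^2 * P / ((be + 1) * (be * Q))"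
      if "m \<ge> 0" "Q > 0" for m P Q :: real
      using be that by (simp add: power2_eq_square divide_simps add_pos_nonneg)
    then show ?thesis
      using N by simp
  qed
  also have "\<dots> \<le> (be + 1) * exp (be^2 + be) / ((be + 1) * (be * real N powr be))"
    using two_mult_square_powr_le_exp[OF assms(1,2)] be N by (intro divide_right_mono) auto
  also have "\<dots> = exp (be^2 + be) / (be * real N powr be)"
    using be by simp
  finally show ?thesis .
qed

section \<open>The Riemann--Liouville integral after repeated integration by parts\<close>

text \<open>For \<open>\<alpha>(t) < 1\<close> the integrand is unbounded at \<open>\<tau> = t\<close>, hence measurability is
  established on \<open>[a, t)\<close> and integrability from the integrable kernel.\<close>

lemma RL_left_integral_eq_integral:
  fixes x :: "real \<Rightarrow> real"
  assumes "a < t" "0 < \<alpha> t" and x: "continuous_on {a..t} x"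
  shows "RL_left_integral a \<alpha> x t = integral {a..t} (\<lambda>\<tau>. (t - \<tau>) powr (\<alpha> t - 1) * x \<tau>) / Gamma (\<alpha> t)"
proof -
  define g where "g = (\<lambda>\<tau>. (t - \<tau>) powr (\<alpha> t - 1) * x \<tau>)"
  have "(\<lambda>\<tau>. (t - \<tau>) powr (\<alpha> t - 1)) absolutely_integrable_on {a..t}"
    using has_integral_powr_kernel[OF assms(1,2)]
    by (intro nonnegative_absolutely_integrable) (auto simp: integrable_on_def)
  moreover have "x \<in> borel_measurable (lebesgue_on {a..t})"
    by (rule continuous_imp_measurable_on_sets_lebesgue[OF x]) auto
  moreover have "bounded (x ` {a..t})"
    by (intro compact_imp_bounded compact_continuous_image x) auto
  ultimately have "(\<lambda>\<tau>. x \<tau> * (t - \<tau>) powr (\<alpha> t - 1)) absolutely_integrable_on {a..t}"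
    by (intro absolutely_integrable_bounded_measurable_product_real) auto
  then have g_int: "set_integrable lebesgue {a..t} g"
    unfolding g_def by (simp add: mult.commute)
  have "continuous_on {a..<t} g"
    unfolding g_def by (intro continuous_intros continuous_on_subset[OF x]) auto
  then have "(\<lambda>\<tau>. indicator {a..<t} \<tau> *\<^sub>R g \<tau> + indicator {t} \<tau> *\<^sub>R g t) \<in> borel_measurable borel"
    by (intro borel_measurable_add borel_measurable_continuous_on_indicator borel_measurable_scaleR
          borel_measurable_indicator borel_measurable_const) auto
  moreover have "(\<lambda>\<tau>. indicator {a..t} \<tau> *\<^sub>R g \<tau>)
                 = (\<lambda>\<tau>. indicator {a..<t} \<tau> *\<^sub>R g \<tau> + indicator {t} \<tau> *\<^sub>R g t)"
    using assms(1) by (auto simp: indicator_def fun_eq_iff)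
  ultimately have "(LBINT \<tau>:{a..t}. g \<tau>) = (LINT \<tau>:{a..t}|lebesgue. g \<tau>)"
    unfolding set_lebesgue_integral_def by (simp add: integral_completion)
  also have "\<dots> = integral {a..t} g"
    by (rule set_lebesgue_integral_eq_integral(2)[OF g_int])
  finally show ?thesis
    unfolding RL_left_integral_def g_def by simp
qed

definition frac_kernel :: "real \<Rightarrow> real \<Rightarrow> real \<Rightarrow> real" where
  "frac_kernel t e \<tau> = (t - \<tau>) powr e / Gamma (e + 1)"

lemma continuous_on_frac_kernel:
  assumes "0 < e"
  shows "continuous_on {a..t} (frac_kernel t e)"
proof -
  have "Gamma (e + 1) \<noteq> 0"
    using assms by (intro Gamma_real_pos[THEN less_imp_neq, symmetric]) simp
  then show ?thesis
    unfolding frac_kernel_def[abs_def] using assms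
    by (intro continuous_on_divide continuous_on_powr' continuous_intros) auto
qed

lemma has_real_derivative_frac_kernel:
  assumes "\<tau> < t" "0 < e"
  shows "(frac_kernel t e has_real_derivative - frac_kernel t (e - 1) \<tau>) (at \<tau>)"
proof -
  have "Gamma (e + 1) \<noteq> 0"
    using assms by (intro Gamma_real_pos[THEN less_imp_neq, symmetric]) simp
  then have "(frac_kernel t e has_real_derivative - (e * (t - \<tau>) powr (e - 1)) / Gamma (e + 1)) (at \<tau>)"
    unfolding frac_kernel_def[abs_def] using assms by (auto intro!: derivative_eq_intros)
  moreover have "Gamma (e + 1) = e * Gamma e"
    using assms by (intro Gamma_plus1) (auto elim: nonpos_Ints_cases)
  ultimately show ?thesis
    using assms by (simp add: frac_kernel_def)
qed

lemma has_integral_frac_kernel_by_parts: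
  fixes D :: "nat \<Rightarrow> real \<Rightarrow> real"
  assumes "a < t" "0 < al"
    and Dc: "\<And>j. j \<le> Suc n \<Longrightarrow> continuous_on {a..t} (D j)"
    and Dd: "\<And>j \<tau>. j \<le> n \<Longrightarrow> \<tau> \<in> {a<..<t} \<Longrightarrow> (D j has_real_derivative D (Suc j) \<tau>) (at \<tau>)"
  defines "be \<equiv> real n + al"
  shows "((\<lambda>\<tau>. frac_kernel t (al - 1) \<tau> * D 0 \<tau>) has_integral
           (\<Sum>j\<le>n. frac_kernel t (be - real j) a * D (n - j) a)
           + integral {a..t} (\<lambda>\<tau>. frac_kernel t be \<tau> * D (Suc n) \<tau>)) {a..t}"
proof -
  define f where "f = (\<lambda>j. (\<lambda>\<tau>. (-1)^(Suc n - j) * frac_kernel t (be - real j) \<tau>))"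
  have pos: "be - real j > 0" if "j \<le> n" for j
    using that assms(2) by (simp add: be_def)
  have "continuous_on {a..t} (f j)" if "j \<le> n" for j
    unfolding f_def using pos[OF that] by (intro continuous_on_mult_left continuous_on_frac_kernel)
  moreover have "(f j has_real_derivative f (Suc j) \<tau>) (at \<tau>)" if "j \<le> n" "\<tau> \<in> {a<..<t}" for j \<tau>
  proof -
    have "Suc n - j = Suc (Suc n - Suc j)"
      using that by simp
    then show ?thesis
      unfolding f_def using has_real_derivative_frac_kernel[of \<tau> t "be - real j"] pos that
      by (auto intro!: derivative_eq_intros simp: diff_diff_eq add.commute)
  qed
  ultimately have parts:
    "((\<lambda>\<tau>. f (Suc n) \<tau> * D 0 \<tau>) has_integral
       (-1)^n * ((\<Sum>j\<le>n. (-1)^j * (f j t * D (n - j) t - f j a * D (n - j) a))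
                 - integral {a..t} (\<lambda>\<tau>. f 0 \<tau> * D (Suc n) \<tau>))) {a..t}"
    using assms(1) by (intro has_integral_iterated_by_parts Dc Dd) auto
  have "(-1)^n * ((-1)^j * (f j t * D (n - j) t - f j a * D (n - j) a))
      = frac_kernel t (be - real j) a * D (n - j) a" if "j \<le> n" for j
  proof -
    have "(-1::real)^n * (-1)^j * (-1)^(Suc n - j) = (-1)^(Suc (2 * n))"
      using that by (simp flip: power_add)
    then show ?thesis
      using pos[OF that] by (simp add: f_def frac_kernel_def mult.assoc[symmetric])
  qed
  then have "(-1)^n * (\<Sum>j\<le>n. (-1)^j * (f j t * D (n - j) t - f j a * D (n - j) a))
      = (\<Sum>j\<le>n. frac_kernel t (be - real j) a * D (n - j) a)"
    unfolding sum_distrib_left by (intro sum.cong refl) auto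
  moreover have "(-1)^n * integral {a..t} (\<lambda>\<tau>. f 0 \<tau> * D (Suc n) \<tau>)
      = - integral {a..t} (\<lambda>\<tau>. frac_kernel t be \<tau> * D (Suc n) \<tau>)"
    by (simp add: f_def mult.assoc flip: power_add)
  moreover have "f (Suc n) = frac_kernel t (al - 1)"
    by (simp add: f_def be_def fun_eq_iff)
  ultimately show ?thesis
    using parts by (simp add: right_diff_distrib[of "(-1)^n"])
qed

lemma RL_left_integral_by_parts:
  fixes D :: "nat \<Rightarrow> real \<Rightarrow> real"
  assumes "a < t" "0 < \<alpha> t"
    and Dc: "\<And>j. j \<le> Suc n \<Longrightarrow> continuous_on {a..t} (D j)"
    and Dd: "\<And>j \<tau>. j \<le> n \<Longrightarrow> \<tau> \<in> {a<..<t} \<Longrightarrow> (D j has_real_derivative D (Suc j) \<tau>) (at \<tau>)"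
  defines "be \<equiv> real n + \<alpha> t"
  shows "RL_left_integral a \<alpha> (D 0) t =
           (\<Sum>j\<le>n. (t - a) powr (be - real j) / Gamma (be - real j + 1) * D (n - j) a)
           + integral {a..t} (\<lambda>\<tau>. (t - \<tau>) powr be * D (Suc n) \<tau>) / Gamma (be + 1)"
  using has_integral_frac_kernel_by_parts[where D = D, OF assms(1,2) Dc Dd]
    RL_left_integral_eq_integral[of a t \<alpha> "D 0"] assms(1,2) Dc[of 0]
  by (simp add: frac_kernel_def be_def integral_unique flip: integral_divide)

lemma sum_pochhammer_falling_fact_eq:
  fixes be :: real
  assumes "j \<le> N" "real j - be \<notin> \<int>"
  shows "(\<Sum>p\<le>N. pochhammer (-be) p / fact p * falling_fact p j)
         = pochhammer (-be) j * (1 + (\<Sum>p = Suc j..N. Gamma (real p - be) / (Gamma (real j - be) * fact (p - j))))"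
proof -
  have z: "real j - be \<notin> \<int>\<^sub>\<le>\<^sub>0" "Gamma (real j - be) \<noteq> 0"
    using assms(2) nonpos_Ints_subset_Ints by (auto simp: Gamma_eq_zero_iff)
  have summand: "pochhammer (-be) p / fact p * falling_fact p j
      = pochhammer (-be) j * (Gamma (real p - be) / (Gamma (real j - be) * fact (p - j)))"
    if "j \<le> p" for p
  proof -
    have "pochhammer (-be) p = pochhammer (-be) j * pochhammer (real j - be) (p - j)"
      using that pochhammer_product[of j p "-be"] by (simp add: add.commute)
    also have "pochhammer (real j - be) (p - j) = Gamma (real p - be) / Gamma (real j - be)"
      using that by (simp add: pochhammer_Gamma[OF z(1)] of_nat_diff)
    finally show ?thesis
      using that by (simp add: falling_fact_eq_fact_div)
  qed
  have "(\<Sum>p\<le>N. pochhammer (-be) p / fact p * falling_fact p j)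
      = (\<Sum>p = j..N. pochhammer (-be) p / fact p * falling_fact p j)"
    by (rule sum.mono_neutral_right) (auto simp: falling_fact_eq_0)
  also have "\<dots> = pochhammer (-be) j * (\<Sum>p = j..N. Gamma (real p - be) / (Gamma (real j - be) * fact (p - j)))"
    unfolding sum_distrib_left by (intro sum.cong refl summand) auto
  also have "(\<Sum>p = j..N. Gamma (real p - be) / (Gamma (real j - be) * fact (p - j)))
      = 1 + (\<Sum>p = Suc j..N. Gamma (real p - be) / (Gamma (real j - be) * fact (p - j)))"
    using assms(1) z by (subst sum.atLeast_Suc_atMost) auto
  finally show ?thesis .
qed

lemma sum_pochhammer_falling_fact_eq_A_coef:
  fixes al :: real
  assumes al: "0 < al" "al < 1" and "j \<le> n" "n < N"
  defines "be \<equiv> real n + al"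
  shows "(-1)^j / Gamma (be + 1) * (\<Sum>p\<le>N. pochhammer (-be) p / fact p * falling_fact p j)
         = A_coef n N al (n - j)"
proof -
  have "be \<notin> \<int>"
    unfolding be_def using frac_shift_not_Ints(1)[OF al, of "real n"] by simp
  have "real j - be \<notin> \<int>"
    using frac_shift_not_Ints(2)[OF al, of "real j - real n"] by (simp add: be_def algebra_simps)
  then have sum: "(\<Sum>p\<le>N. pochhammer (-be) p / fact p * falling_fact p j)
      = pochhammer (-be) j * (1 + (\<Sum>p = Suc j..N. Gamma (real p - be) / (Gamma (real j - be) * fact (p - j))))"
    using assms by (intro sum_pochhammer_falling_fact_eq) auto
  have "(-1)^j * pochhammer (-be) j * Gamma (be - real j + 1) = Gamma (be + 1)"
    by (rule pochhammer_neg_mult_Gamma[OF \<open>be \<notin> \<int>\<close>])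
  moreover have "Gamma (be + 1) \<noteq> 0"
    using al by (simp add: be_def Gamma_real_pos[THEN less_imp_neq, symmetric])
  moreover from calculation have "Gamma (be - real j + 1) \<noteq> 0"
    by auto
  ultimately have "(-1)^j / Gamma (be + 1) * pochhammer (-be) j = 1 / Gamma (be - real j + 1)"
    by (auto simp: field_simps)
  moreover have "n + 1 - (n - j) = Suc j" "real (n - j) + 1 + al = be - real j + 1"
    "- al - real (n - j) = real j - be" "\<And>p. p + (n - j) - n = p - j"
    "\<And>p. real p - real n - al = real p - be"
    using assms by (auto simp: be_def)
  ultimately show ?thesis
    unfolding sum A_coef_def by (simp only: mult.assoc[symmetric])
qed

lemma B_coef_eq:
  fixes al h W :: real
  assumes al: "0 < al" "al < 1" and "n + 1 \<le> p" "h > 0"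
  defines "be \<equiv> real n + al"
  shows "- ((-1)^n) * (pochhammer (-be) p / fact p * h powr (be - real p) * falling_fact p (Suc n)) * W
           / Gamma (be + 1)
         = h powr al * (B_coef n al p * h powr (real n - real p) * (real (p - n) * W))"
proof -
  define X where "X = pochhammer (1 - al) (p - Suc n)"
  have "be \<notin> \<int>"
    unfolding be_def using frac_shift_not_Ints(1)[OF al, of "real n"] by simp
  have "1 - al \<notin> \<int>\<^sub>\<le>\<^sub>0"
    using frac_shift_not_Ints(2)[OF al, of 1] nonpos_Ints_subset_Ints by auto
  then have GX: "Gamma (real p - real n - al) = X * Gamma (1 - al)"
    using assms(3) by (simp add: X_def pochhammer_Gamma Gamma_eq_zero_iff of_nat_diff algebra_simps)
  have "(-1)^(Suc n) * pochhammer (-be) (Suc n) * Gamma al = Gamma (be + 1)"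
    using pochhammer_neg_mult_Gamma[OF \<open>be \<notin> \<int>\<close>, of "Suc n"] by (simp add: be_def)
  then have "(-1)^(Suc n) * Gamma (be + 1)
             = ((-1::real)^(Suc n) * (-1)^(Suc n)) * (pochhammer (-be) (Suc n) * Gamma al)"
    by (metis mult.assoc)
  then have poch_Suc: "pochhammer (-be) (Suc n) = - ((-1)^n) * Gamma (be + 1) / Gamma al"
    using Gamma_real_pos[OF al(1)] by (simp add: field_simps flip: power_add)
  have poch: "pochhammer (-be) p = pochhammer (-be) (Suc n) * X"
    using assms(3) pochhammer_product[of "Suc n" p "-be"] by (simp add: X_def be_def)
  have ff: "falling_fact p (Suc n) = fact p / fact (p - Suc n)"
    using assms(3) by (simp add: falling_fact_eq_fact_div)
  have fact_Suc_diff: "(fact (p - n) :: real) = real (p - n) * fact (p - Suc n)"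
    using assms(3) by (metis Suc_diff_Suc Suc_le_lessD Suc_eq_plus1 fact_Suc of_nat_fact of_nat_mult)
  have hpow: "h powr (be - real p) = h powr al * h powr (real n - real p)"
    by (simp add: be_def algebra_simps flip: powr_add)
  have pos: "Gamma al > 0" "Gamma (1 - al) > 0" "Gamma (be + 1) > 0" "real (p - n) > 0" "(fact p :: real) > 0"
    "(fact (p - Suc n) :: real) > 0"
    using al assms(3) by (simp_all add: be_def)
  have "- ((-1)^n) * (pochhammer (-be) p / fact p * h powr (be - real p) * falling_fact p (Suc n)) * W
          / Gamma (be + 1)
        = ((-1)^n * (-1)^n) * (X * h powr al * h powr (real n - real p) * W / (Gamma al * fact (p - Suc n)))"
    unfolding poch poch_Suc ff hpow using pos by (simp add: field_simps)
  also have "\<dots> = h powr al * (B_coef n al p * h powr (real n - real p) * (real (p - n) * W))"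
    unfolding B_coef_def GX fact_Suc_diff using pos by (simp add: field_simps flip: power_add)
  finally show ?thesis .
qed

lemma integral_kernel_taylor_by_parts:
  fixes D :: "nat \<Rightarrow> real \<Rightarrow> real"
  assumes "a < t"
    and Dc: "\<And>j. j \<le> Suc n \<Longrightarrow> continuous_on {a..t} (D j)"
    and Dd: "\<And>j \<tau>. j \<le> n \<Longrightarrow> \<tau> \<in> {a<..<t} \<Longrightarrow> (D j has_real_derivative D (Suc j) \<tau>) (at \<tau>)"
  shows "integral {a..t} (\<lambda>\<tau>. kernel_taylor_deriv a t be N 0 \<tau> * D (Suc n) \<tau>)
     = (\<Sum>j\<le>n. (-1)^j * (kernel_taylor_deriv a t be N j t * D (n - j) t
                        - kernel_taylor_deriv a t be N j a * D (n - j) a))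
       - (-1)^n * integral {a..t} (\<lambda>\<tau>. kernel_taylor_deriv a t be N (Suc n) \<tau> * D 0 \<tau>)"
proof -
  have "continuous_on {a..t} (kernel_taylor_deriv a t be N j)" for j
    using has_real_derivative_kernel_taylor_deriv
    by (meson DERIV_isCont continuous_at_imp_continuous_on)
  then have "((\<lambda>\<tau>. kernel_taylor_deriv a t be N (Suc n) \<tau> * D 0 \<tau>) has_integral
     (-1)^n * ((\<Sum>j\<le>n. (-1)^j * (kernel_taylor_deriv a t be N j t * D (n - j) t
                                   - kernel_taylor_deriv a t be N j a * D (n - j) a))
               - integral {a..t} (\<lambda>\<tau>. kernel_taylor_deriv a t be N 0 \<tau> * D (Suc n) \<tau>))) {a..t}"
    using assms
    by (intro has_integral_iterated_by_parts has_real_derivative_kernel_taylor_deriv Dc Dd) auto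
  from integral_unique[OF this]
  have "(-1)^n * integral {a..t} (\<lambda>\<tau>. kernel_taylor_deriv a t be N (Suc n) \<tau> * D 0 \<tau>)
     = (\<Sum>j\<le>n. (-1)^j * (kernel_taylor_deriv a t be N j t * D (n - j) t
                        - kernel_taylor_deriv a t be N j a * D (n - j) a))
       - integral {a..t} (\<lambda>\<tau>. kernel_taylor_deriv a t be N 0 \<tau> * D (Suc n) \<tau>)"
    by (simp flip: power_add mult.assoc)
  then show ?thesis by linarith
qed

lemma kernel_taylor_boundary_at_left:
  fixes be :: real and y :: "nat \<Rightarrow> real"
  assumes "be \<notin> \<int>" "n \<le> N"
  shows "(\<Sum>j\<le>n. (-1)^j * (kernel_taylor_deriv a t be N j a * y (n - j))) / Gamma (be + 1)
       = (\<Sum>j\<le>n. (t - a) powr (be - real j) / Gamma (be - real j + 1) * y (n - j))"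
  unfolding sum_divide_distrib
proof (intro sum.cong refl)
  fix j assume "j \<in> {..n}"
  then have "j \<le> N" using assms(2) by simp
  have Q: "(-1)^j * pochhammer (-be) j * Gamma (be - real j + 1) = Gamma (be + 1)"
    by (rule pochhammer_neg_mult_Gamma[OF assms(1)])
  have "be + 1 \<notin> \<int>\<^sub>\<le>\<^sub>0"
    using assms(1) Ints_diff[of "be + 1" 1] nonpos_Ints_subset_Ints by auto
  then have "Gamma (be + 1) \<noteq> 0"
    by (simp add: Gamma_eq_zero_iff)
  with Q have "Gamma (be - real j + 1) \<noteq> 0"
    by auto
  with Q \<open>Gamma (be + 1) \<noteq> 0\<close> show "(-1)^j * (kernel_taylor_deriv a t be N j a * y (n - j)) / Gamma (be + 1)
      = (t - a) powr (be - real j) / Gamma (be - real j + 1) * y (n - j)"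
    by (simp add: kernel_taylor_deriv_at_left[OF \<open>j \<le> N\<close>] field_simps)
qed

lemma kernel_taylor_boundary_at_right:
  fixes al :: real and y :: "nat \<Rightarrow> real"
  assumes "a < t" "0 < al" "al < 1" "n < N"
  defines "be \<equiv> real n + al"
  shows "(\<Sum>j\<le>n. (-1)^j * (kernel_taylor_deriv a t be N j t * y (n - j))) / Gamma (be + 1)
       = (t - a) powr al * (\<Sum>k = 0..n. A_coef n N al k * (t - a) ^ k * y k)"
proof -
  have "(-1)^j * (kernel_taylor_deriv a t be N j t * y (n - j)) / Gamma (be + 1)
      = (t - a) powr al * (A_coef n N al (n - j) * (t - a) ^ (n - j) * y (n - j))" if "j \<le> n" for j
  proof -
    have "be - real j = al + real (n - j)"
      using that by (simp add: be_def of_nat_diff)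
    then have "(t - a) powr (be - real j) = (t - a) powr al * (t - a) ^ (n - j)"
      using assms(1) by (simp add: powr_add powr_realpow)
    moreover have "(-1)^j * (kernel_taylor_deriv a t be N j t * y (n - j)) / Gamma (be + 1)
      = (t - a) powr (be - real j)
        * ((-1)^j / Gamma (be + 1) * (\<Sum>p\<le>N. pochhammer (-be) p / fact p * falling_fact p j))
        * y (n - j)"
      by (simp add: kernel_taylor_deriv_at_right[OF assms(1)] mult_ac)
    ultimately show ?thesis
      unfolding sum_pochhammer_falling_fact_eq_A_coef[OF assms(2,3) that assms(4), folded be_def]
      by (simp add: mult_ac)
  qed
  then have "(\<Sum>j\<le>n. (-1)^j * (kernel_taylor_deriv a t be N j t * y (n - j))) / Gamma (be + 1)
      = (t - a) powr al * (\<Sum>j = 0..n. A_coef n N al (n + 0 - j) * (t - a) ^ (n + 0 - j) * y (n + 0 - j))"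
    by (simp add: sum_divide_distrib sum_distrib_left atMost_atLeast0)
  also have "\<dots> = (t - a) powr al * (\<Sum>k = 0..n. A_coef n N al k * (t - a) ^ k * y k)"
    using sum.atLeastAtMost_rev[of "\<lambda>k. A_coef n N al k * (t - a) ^ k * y k" 0 n] by simp
  finally show ?thesis .
qed

lemma kernel_taylor_deriv_Suc_integral:
  fixes al :: real and n :: nat and x :: "real \<Rightarrow> real"
  assumes "a < t" "0 < al" "al < 1" and x: "continuous_on {a..t} x"
  defines "be \<equiv> real n + al"
  shows "- ((-1)^n) * integral {a..t} (\<lambda>\<tau>. kernel_taylor_deriv a t be N (Suc n) \<tau> * x \<tau>)
           / Gamma (be + 1)
         = (t - a) powr al
           * (\<Sum>k = n + 1..N. B_coef n al k * (t - a) powr (real n - real k) * V_fun a x n k t)"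
proof -
  define c where
    "c p = pochhammer (-be) p / fact p * (t - a) powr (be - real p) * falling_fact p (Suc n)" for p
  define W where "W p = integral {a..t} (\<lambda>\<tau>. (\<tau> - a)^(p - Suc n) * x \<tau>)" for p
  have "integral {a..t} (\<lambda>\<tau>. kernel_taylor_deriv a t be N (Suc n) \<tau> * x \<tau>)
      = integral {a..t} (\<lambda>\<tau>. \<Sum>p\<le>N. c p * ((\<tau> - a)^(p - Suc n) * x \<tau>))"
    by (simp add: kernel_taylor_deriv_def c_def sum_distrib_right mult.assoc)
  also have "\<dots> = (\<Sum>p\<le>N. c p * W p)"
    unfolding W_def
    by (subst integral_sum) (auto intro!: integrable_continuous_interval continuous_intros x)
  also have "\<dots> = (\<Sum>p = n + 1..N. c p * W p)"
    by (rule sum.mono_neutral_right) (auto simp: c_def falling_fact_eq_0)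
  finally have I: "integral {a..t} (\<lambda>\<tau>. kernel_taylor_deriv a t be N (Suc n) \<tau> * x \<tau>)
      = (\<Sum>p = n + 1..N. c p * W p)" .
  have V: "V_fun a x n p t = real (p - n) * W p" for p
    unfolding V_fun_def W_def
    by (simp add: set_borel_integral_eq_integral(2)[OF borel_integrable_atLeastAtMost']
        continuous_intros x)
  then show ?thesis
    unfolding I sum_distrib_left sum_divide_distrib
  proof (intro sum.cong refl)
    fix p assume p: "p \<in> {n + 1..N}"
    have "- ((-1)^n) * (c p * W p) / Gamma (be + 1) = - ((-1)^n) * c p * W p / Gamma (be + 1)"
      by (simp only: mult.assoc)
    also have "\<dots> = (t - a) powr al * (B_coef n al p * (t - a) powr (real n - real p) * (real (p - n) * W p))"
      unfolding c_def be_def by (rule B_coef_eq) (use p assms(1-3) in auto)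
    finally show "- ((-1)^n) * (c p * W p) / Gamma (be + 1)
        = (t - a) powr al * (B_coef n al p * (t - a) powr (real n - real p) * V_fun a x n p t)"
      by (simp only: V)
  qed
qed

lemma integral_kernel_taylor_mult_deriv:
  fixes D :: "nat \<Rightarrow> real \<Rightarrow> real"
  assumes "a < t" "0 < al" "al < 1" "n < N"
    and Dc: "\<And>j. j \<le> Suc n \<Longrightarrow> continuous_on {a..t} (D j)"
    and Dd: "\<And>j \<tau>. j \<le> n \<Longrightarrow> \<tau> \<in> {a<..<t} \<Longrightarrow> (D j has_real_derivative D (Suc j) \<tau>) (at \<tau>)"
  defines "be \<equiv> real n + al"
  shows "integral {a..t} (\<lambda>\<tau>. kernel_taylor_deriv a t be N 0 \<tau> * D (Suc n) \<tau>) / Gamma (be + 1)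
       = (t - a) powr al * ((\<Sum>k = 0..n. A_coef n N al k * (t - a) ^ k * D k t)
           + (\<Sum>k = n + 1..N. B_coef n al k * (t - a) powr (real n - real k) * V_fun a (D 0) n k t))
         - (\<Sum>j\<le>n. (t - a) powr (be - real j) / Gamma (be - real j + 1) * D (n - j) a)"
proof -
  have "be \<notin> \<int>"
    unfolding be_def using frac_shift_not_Ints(1)[OF assms(2,3), of "real n"] by simp
  have parts: "integral {a..t} (\<lambda>\<tau>. kernel_taylor_deriv a t be N 0 \<tau> * D (Suc n) \<tau>)
     = (\<Sum>j\<le>n. (-1)^j * (kernel_taylor_deriv a t be N j t * D (n - j) t
                        - kernel_taylor_deriv a t be N j a * D (n - j) a))
       - (-1)^n * integral {a..t} (\<lambda>\<tau>. kernel_taylor_deriv a t be N (Suc n) \<tau> * D 0 \<tau>)"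
    by (intro integral_kernel_taylor_by_parts assms(1) Dc Dd)
  have split: "integral {a..t} (\<lambda>\<tau>. kernel_taylor_deriv a t be N 0 \<tau> * D (Suc n) \<tau>) / Gamma (be + 1)
      = (\<Sum>j\<le>n. (-1)^j * (kernel_taylor_deriv a t be N j t * D (n - j) t)) / Gamma (be + 1)
        - (\<Sum>j\<le>n. (-1)^j * (kernel_taylor_deriv a t be N j a * D (n - j) a)) / Gamma (be + 1)
        + - ((-1)^n) * integral {a..t} (\<lambda>\<tau>. kernel_taylor_deriv a t be N (Suc n) \<tau> * D 0 \<tau>)
            / Gamma (be + 1)"
    unfolding parts by (simp add: right_diff_distrib sum_subtractf diff_divide_distrib)
  have right: "(\<Sum>j\<le>n. (-1)^j * (kernel_taylor_deriv a t be N j t * D (n - j) t)) / Gamma (be + 1)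
      = (t - a) powr al * (\<Sum>k = 0..n. A_coef n N al k * (t - a) ^ k * D k t)"
    unfolding be_def by (rule kernel_taylor_boundary_at_right) (use assms in auto)
  have left: "(\<Sum>j\<le>n. (-1)^j * (kernel_taylor_deriv a t be N j a * D (n - j) a)) / Gamma (be + 1)
      = (\<Sum>j\<le>n. (t - a) powr (be - real j) / Gamma (be - real j + 1) * D (n - j) a)"
    by (rule kernel_taylor_boundary_at_left) (use \<open>be \<notin> \<int>\<close> assms(4) in auto)
  have remainder: "- ((-1)^n) * integral {a..t} (\<lambda>\<tau>. kernel_taylor_deriv a t be N (Suc n) \<tau> * D 0 \<tau>)
           / Gamma (be + 1)
      = (t - a) powr al
        * (\<Sum>k = n + 1..N. B_coef n al k * (t - a) powr (real n - real k) * V_fun a (D 0) n k t)"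
    unfolding be_def by (rule kernel_taylor_deriv_Suc_integral) (use assms Dc[of 0] in auto)
  show ?thesis
    unfolding split right left remainder by (simp add: algebra_simps)
qed

section \<open>The error estimate\<close>

lemma RL_left_integral_minus_expansion:
  fixes D :: "nat \<Rightarrow> real \<Rightarrow> real"
  assumes "a < t" "0 < \<alpha> t" "\<alpha> t < 1" "n < N"
    and Dc: "\<And>j. j \<le> Suc n \<Longrightarrow> continuous_on {a..t} (D j)"
    and Dd: "\<And>j \<tau>. j \<le> n \<Longrightarrow> \<tau> \<in> {a<..<t} \<Longrightarrow> (D j has_real_derivative D (Suc j) \<tau>) (at \<tau>)"
  defines "be \<equiv> real n + \<alpha> t"
  shows "RL_left_integral a \<alpha> (D 0) t
           - (t - a) powr \<alpha> t * ((\<Sum>k = 0..n. A_coef n N (\<alpha> t) k * (t - a) ^ k * D k t)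
              + (\<Sum>k = n + 1..N. B_coef n (\<alpha> t) k * (t - a) powr (real n - real k) * V_fun a (D 0) n k t))
         = (integral {a..t} (\<lambda>\<tau>. (t - \<tau>) powr be * D (Suc n) \<tau>)
            - integral {a..t} (\<lambda>\<tau>. kernel_taylor_deriv a t be N 0 \<tau> * D (Suc n) \<tau>)) / Gamma (be + 1)"
  using RL_left_integral_by_parts[where a = a and t = t and \<alpha> = \<alpha> and n = n and D = D,
      OF assms(1,2) Dc Dd]
    integral_kernel_taylor_mult_deriv[where a = a and t = t and al = "\<alpha> t" and n = n and D = D,
      OF assms(1-4) Dc Dd]
  by (simp add: be_def diff_divide_distrib)

lemma abs_kernel_taylor_error_le:
  fixes al L :: real and g :: "real \<Rightarrow> real"
  assumes "a < t" "0 < al" "al < 1" "n + 1 \<le> N"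
    and "continuous_on {a..t} g" "\<And>\<tau>. \<tau> \<in> {a..t} \<Longrightarrow> \<bar>g \<tau>\<bar> \<le> L"
  defines "be \<equiv> real n + al"
  shows "\<bar>(integral {a..t} (\<lambda>\<tau>. (t - \<tau>) powr be * g \<tau>)
           - integral {a..t} (\<lambda>\<tau>. kernel_taylor_deriv a t be N 0 \<tau> * g \<tau>)) / Gamma (be + 1)\<bar>
         \<le> L * exp (be^2 + be) / (Gamma (be + 1) * be * real N powr be) * (t - a) powr (be + 1)"
proof -
  have be: "real n < be" "be < real n + 1" "be \<notin> \<int>"
    using assms(2,3) frac_shift_not_Ints(1)[OF assms(2,3), of "real n"] by (auto simp: be_def)
  have "L \<ge> 0"
    using assms(1) assms(6)[of a] by auto
  have "Gamma (be + 1) > 0"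
    using be by simp
  have "\<bar>integral {a..t} (\<lambda>\<tau>. (t - \<tau>) powr be * g \<tau>)
         - integral {a..t} (\<lambda>\<tau>. kernel_taylor_deriv a t be N 0 \<tau> * g \<tau>)\<bar>
      \<le> L * ((t - a) powr (be + 1) * (\<bar>pochhammer (-be) (Suc N)\<bar> / fact (Suc N) / (be + 1)))"
    using abs_integral_kernel_taylor_remainder_mult_le[OF assms(1) _ be(3) assms(5,6)] be
    by (simp add: field_simps)
  also have "\<dots> \<le> L * ((t - a) powr (be + 1) * (exp (be^2 + be) / (be * real N powr be)))"
    using remainder_coeff_le_exp[OF be(1,2) assms(4)] \<open>L \<ge> 0\<close>
    by (intro mult_left_mono) auto
  finally show ?thesis
    using \<open>Gamma (be + 1) > 0\<close> by (simp add: abs_div divide_right_mono field_simps)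
qed

lemma abs_le_Sup_abs_image:
  fixes g :: "real \<Rightarrow> real"
  assumes "continuous_on {a..t} g" "\<tau> \<in> {a..t}"
  shows "\<bar>g \<tau>\<bar> \<le> Sup ((\<lambda>\<tau>. \<bar>g \<tau>\<bar>) ` {a..t})"
proof -
  have "compact ((\<lambda>\<tau>. \<bar>g \<tau>\<bar>) ` {a..t})"
    by (intro compact_continuous_image continuous_intros assms(1)) auto
  then show ?thesis
    using assms(2) by (auto intro!: cSup_upper bounded_imp_bdd_above compact_imp_bounded)
qed

lemma derivs_on_subinterval:
  fixes D :: "nat \<Rightarrow> real \<Rightarrow> real"
  assumes "t \<le> b"
    and deriv: "\<And>k \<tau>. k \<le> n \<Longrightarrow> \<tau> \<in> {a..b} \<Longrightarrow> (D k has_real_derivative D (Suc k) \<tau>) (at \<tau> within {a..b})"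
    and cont: "continuous_on {a..b} (D (Suc n))"
  shows "\<And>j. j \<le> Suc n \<Longrightarrow> continuous_on {a..t} (D j)"
    and "\<And>j \<tau>. j \<le> n \<Longrightarrow> \<tau> \<in> {a<..<t} \<Longrightarrow> (D j has_real_derivative D (Suc j) \<tau>) (at \<tau>)"
proof -
  fix j assume "j \<le> Suc n"
  then have "continuous_on {a..b} (D j)"
    using cont by (cases "j = Suc n") (auto intro!: DERIV_continuous_on deriv)
  then show "continuous_on {a..t} (D j)"
    by (rule continuous_on_subset) (use assms(1) in auto)
next
  fix j \<tau> assume "j \<le> n" "\<tau> \<in> {a<..<t}"
  then have "(D j has_real_derivative D (Suc j) \<tau>) (at \<tau> within {a<..<b})"
    using assms(1) by (intro DERIV_subset[OF deriv]) auto
  then show "(D j has_real_derivative D (Suc j) \<tau>) (at \<tau>)"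
    using \<open>\<tau> \<in> {a<..<t}\<close> assms(1) by (subst (asm) at_within_open) auto
qed

theorem theorem3:
  fixes a b :: real and \<alpha> \<alpha>' :: "real \<Rightarrow> real" and n N :: nat
    and x :: "real \<Rightarrow> real" and Dx :: "nat \<Rightarrow> real \<Rightarrow> real"
  assumes ab: "a < b"
    and alpha_range: "\<And>t. t \<in> {a..b} \<Longrightarrow> 0 < \<alpha> t \<and> \<alpha> t < 1"
    and alpha_deriv: "\<And>t. t \<in> {a..b} \<Longrightarrow> (\<alpha> has_real_derivative \<alpha>' t) (at t within {a..b})"
    and alpha'_cont: "continuous_on {a..b} \<alpha>'"
    and N_ge: "N \<ge> n + 1"
    and Dx0: "Dx 0 = x"
    and Dx_deriv: "\<And>k t. k \<le> n \<Longrightarrow> t \<in> {a..b} \<Longrightarrow>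
                     (Dx k has_real_derivative Dx (Suc k) t) (at t within {a..b})"
    and Dx_cont: "continuous_on {a..b} (Dx (n + 1))"
    and t_in: "t \<in> {a<..b}"
  shows "\<bar>RL_left_integral a \<alpha> x t
           - (t - a) powr \<alpha> t *
             ((\<Sum>k = 0..n. A_coef n N (\<alpha> t) k * (t - a) ^ k * Dx k t)
              + (\<Sum>k = n + 1..N. B_coef n (\<alpha> t) k * (t - a) powr (real n - real k) * V_fun a x n k t))\<bar>
         \<le> Sup ((\<lambda>\<tau>. \<bar>Dx (n + 1) \<tau>\<bar>) ` {a..t})
           * exp ((real n + \<alpha> t)\<^sup>2 + real n + \<alpha> t)
           / (Gamma (real n + 1 + \<alpha> t) * (real n + \<alpha> t) * real N powr (real n + \<alpha> t))
           * (t - a) powr (real n + 1 + \<alpha> t)"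
proof -
  have "a < t" "t \<le> b" "0 < \<alpha> t" "\<alpha> t < 1"
    using t_in alpha_range[of t] by auto
  note Dc = derivs_on_subinterval(1)[OF \<open>t \<le> b\<close> Dx_deriv Dx_cont[unfolded Suc_eq_plus1[symmetric]]]
  note Dd = derivs_on_subinterval(2)[OF \<open>t \<le> b\<close> Dx_deriv Dx_cont[unfolded Suc_eq_plus1[symmetric]]]
  have "\<bar>Dx (Suc n) \<tau>\<bar> \<le> Sup ((\<lambda>\<tau>. \<bar>Dx (n + 1) \<tau>\<bar>) ` {a..t})" if "\<tau> \<in> {a..t}" for \<tau>
    using abs_le_Sup_abs_image[OF Dc[of "Suc n"] that] by simp
  then show ?thesis
    unfolding Dx0[symmetric]
    using RL_left_integral_minus_expansion[where a = a and t = t and \<alpha> = \<alpha> and n = n and N = N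
        and D = Dx, OF _ _ _ _ Dc Dd]
      abs_kernel_taylor_error_le[OF \<open>a < t\<close> \<open>0 < \<alpha> t\<close> \<open>\<alpha> t < 1\<close> N_ge Dc[of "Suc n"]]
      \<open>a < t\<close> \<open>0 < \<alpha> t\<close> \<open>\<alpha> t < 1\<close> N_ge
    by (simp add: algebra_simps)
qed

end
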